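(* Let $Y$ be a closed subspace of $\ell_\infty$ which is a Grothendieck space and which contains a closed subspace isomorphic to $c_0$. Then there exists an $\ell_\infty$-Grothendieck subspace of $\ell_\infty$ which is isomorphic to $Y$.
   Context: A Banach space $Z$ is a Grothendieck space if every weak$^*$-convergent sequence in $Z^*$ is weakly convergent. Let $S$ be a closed subspace of $\ell_\infty$ containing $c_0$ and let $j:c_0\to S$ be the inclusion map; $j^{**}:c_0^{**}\equiv\ell_\infty\to S^{**}$ identifies $\ell_\infty$ with a subspace of $S^{**}$. A sequence $(x_n^* )$ in $S^*$ is $\sigma(S^*,\ell_\infty)$-convergent to $x^*$ if $\langle j^{**}z,x_n^*\rangle\to\langle j^{**}z,x^*\rangle$ for every $z\in\ell_\infty$. The closed subspace $S$ of $\ell_\infty$ is an $\ell_\infty$-Grothendieck subspace if $c_0\subseteq S$ and every $\sigma(S^*,S)$-convergent sequence in $S^*$ is $\sigma(S^*,\ell_\infty)$-convergent (to the same limit). *)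

theory Defs
  imports "HOL-Analysis.Analysis"
begin

text \<open>The Banach space l_infty of bounded real sequences, realised as the type of
  bounded continuous functions on the discrete space nat (sup norm).\<close>
type_synonym linf = "nat \<Rightarrow>\<^sub>C real"

definition c0 :: "linf set" where
  "c0 = {x. (\<lambda>n. apply_bcontfun x n) \<longlonglongrightarrow> 0}"

definition unitvec :: "nat \<Rightarrow> linf" where
  "unitvec n = Bcontfun (\<lambda>k. if k = n then 1 else 0)"

definition closed_subspace :: "linf set \<Rightarrow> bool" where
  "closed_subspace S \<longleftrightarrow> subspace S \<and> closed S"

definition linear_on_set :: "'a::real_vector set \<Rightarrow> ('a \<Rightarrow> 'b::real_vector) \<Rightarrow> bool" where
  "linear_on_set S T \<longleftrightarrow>
     (\<forall>x\<in>S. \<forall>y\<in>S. T (x + y) = T x + T y) \<and> (\<forall>a. \<forall>x\<in>S. T (a *\<^sub>R x) = a *\<^sub>R T x)"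

definition isomorphic_sub :: "linf set \<Rightarrow> linf set \<Rightarrow> bool" where
  "isomorphic_sub A B \<longleftrightarrow>
     (\<exists>T. linear_on_set A T \<and> T ` A = B \<and>
          (\<exists>c C. 0 < c \<and> (\<forall>x\<in>A. c * norm x \<le> norm (T x) \<and> norm (T x) \<le> C * norm x)))"

text \<open>Dual S^* of a subspace S: bounded linear functionals on S (only their values on S matter).\<close>
definition dual_sp :: "linf set \<Rightarrow> (linf \<Rightarrow> real) set" where
  "dual_sp S = {f. linear_on_set S f \<and> (\<exists>C. \<forall>x\<in>S. \<bar>f x\<bar> \<le> C * norm x)}"

definition dual_ball :: "linf set \<Rightarrow> (linf \<Rightarrow> real) set" where
  "dual_ball S = {f \<in> dual_sp S. \<forall>x\<in>S. \<bar>f x\<bar> \<le> norm x}"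

definition bidual_sp :: "linf set \<Rightarrow> ((linf \<Rightarrow> real) \<Rightarrow> real) set" where
  "bidual_sp S = {F.
     (\<forall>f\<in>dual_sp S. \<forall>g\<in>dual_sp S. F (\<lambda>x. f x + g x) = F f + F g) \<and>
     (\<forall>a. \<forall>f\<in>dual_sp S. F (\<lambda>x. a * f x) = a * F f) \<and> (\<exists>C. \<forall>f\<in>dual_ball S. \<bar>F f\<bar> \<le> C)}"

definition weakstar_conv :: "linf set \<Rightarrow> (nat \<Rightarrow> linf \<Rightarrow> real) \<Rightarrow> (linf \<Rightarrow> real) \<Rightarrow> bool" where
  "weakstar_conv S xs x \<longleftrightarrow> (\<forall>y\<in>S. (\<lambda>n. xs n y) \<longlonglongrightarrow> x y)"

definition weak_conv :: "linf set \<Rightarrow> (nat \<Rightarrow> linf \<Rightarrow> real) \<Rightarrow> (linf \<Rightarrow> real) \<Rightarrow> bool" where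
  "weak_conv S xs x \<longleftrightarrow> (\<forall>F\<in>bidual_sp S. (\<lambda>n. F (xs n)) \<longlonglongrightarrow> F x)"

definition grothendieck :: "linf set \<Rightarrow> bool" where
  "grothendieck S \<longleftrightarrow>
     (\<forall>xs x. (\<forall>n. xs n \<in> dual_sp S) \<and> x \<in> dual_sp S \<and> weakstar_conv S xs x
        \<longrightarrow> (\<exists>y\<in>dual_sp S. weak_conv S xs y))"

text \<open>The adjoint j^* : S^* \<rightarrow> c0^* of the inclusion j : c0 \<rightarrow> S (restriction to c0).\<close>
definition j_star :: "(linf \<Rightarrow> real) \<Rightarrow> (linf \<Rightarrow> real)" where
  "j_star f = (\<lambda>x. if x \<in> c0 then f x else 0)"

text \<open>The canonical identification l_infty = c0^**: z acts on phi in c0^* by sum_n z_n phi(e_n).\<close>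
definition linf_to_c0bidual :: "linf \<Rightarrow> (linf \<Rightarrow> real) \<Rightarrow> real" where
  "linf_to_c0bidual z phi = (\<Sum>n. apply_bcontfun z n * phi (unitvec n))"

definition j_bistar :: "((linf \<Rightarrow> real) \<Rightarrow> real) \<Rightarrow> (linf \<Rightarrow> real) \<Rightarrow> real" where
  "j_bistar G = (\<lambda>f. G (j_star f))"

definition linf_conv :: "(nat \<Rightarrow> linf \<Rightarrow> real) \<Rightarrow> (linf \<Rightarrow> real) \<Rightarrow> bool" where
  "linf_conv xs x \<longleftrightarrow>
     (\<forall>z::linf. (\<lambda>n. j_bistar (linf_to_c0bidual z) (xs n)) \<longlonglongrightarrow> j_bistar (linf_to_c0bidual z) x)"

definition linf_grothendieck_subspace :: "linf set \<Rightarrow> bool" where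
  "linf_grothendieck_subspace S \<longleftrightarrow> closed_subspace S \<and> c0 \<subseteq> S \<and>
     (\<forall>xs x. (\<forall>n. xs n \<in> dual_sp S) \<and> x \<in> dual_sp S \<and> weakstar_conv S xs x
        \<longrightarrow> linf_conv xs x)"

end

(* Choose W in Y and an isomorphism T of W onto c0. Since l_infty is injective (coordinatewise
   Hahn-Banach), T and its inverse extend to operators U and E on l_infty. Reading a sequence as
   a matrix indexed by pairs and taking a generalized limit of every row gives an operator that
   kills c0 and inverts the operator spreading u_k along the k-th row; with it U is corrected to
   an isomorphic embedding Phi of l_infty into itself that still agrees with T on W. Then
   S = Phi(Y) is isomorphic to Y, hence Grothendieck, and contains Phi(W) = c0. Finally, in a
   Grothendieck subspace S containing c0, every z in l_infty acts on S^* by f |-> sum z_n f(e_n)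
   as an element of S^**, so weak* convergent sequences converge against it. *)
theory Submission
  imports Defs "HOL-Library.Nat_Bijection"
begin

section \<open>The Hahn-Banach theorem\<close>

lemma linear_on_set_zero:
  assumes "subspace S" "linear_on_set S f"
  shows "f 0 = 0"
  using assms subspace_0[OF assms(1)] unfolding linear_on_set_def by (metis scale_zero_left)

text \<open>Partial functionals dominated by B times the norm are handled through their graphs: a
  subspace of the product lying below this bound is automatically a graph, by
  dominated_subspace_functional, so Zorn's lemma can be applied to plain sets.\<close>
definition dominated_subspace :: "real \<Rightarrow> ('a::real_normed_vector \<times> real) set \<Rightarrow> bool" where
  "dominated_subspace B G \<longleftrightarrow> subspace G \<and> (\<forall>(x, t)\<in>G. t \<le> B * norm x)"

lemma dominated_subspace_functional:
  assumes G: "dominated_subspace B G" and "(x, a) \<in> G" "(x, b) \<in> G"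
  shows "a = b"
proof -
  have "subspace G" using G unfolding dominated_subspace_def by blast
  then have "(x, a) - (x, b) \<in> G" "(x, b) - (x, a) \<in> G"
    using assms subspace_diff by blast+
  then have "a - b \<le> 0" "b - a \<le> 0"
    using G unfolding dominated_subspace_def by auto
  then show ?thesis by simp
qed

lemma dominated_subspace_Union_chain:
  assumes "C \<noteq> {}" "chain\<^sub>\<subseteq> C" "\<And>G. G \<in> C \<Longrightarrow> dominated_subspace B G"
  shows "dominated_subspace B (\<Union>C)"
  unfolding dominated_subspace_def subspace_def
proof (intro conjI ballI allI)
  show "0 \<in> \<Union>C"
    using assms subspace_0 unfolding dominated_subspace_def by blast
next
  fix p q assume "p \<in> \<Union>C" "q \<in> \<Union>C"
  then obtain G H where "G \<in> C" "H \<in> C" "p \<in> G" "q \<in> H" by blast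
  moreover from \<open>G \<in> C\<close> \<open>H \<in> C\<close> have "G \<subseteq> H \<or> H \<subseteq> G"
    using assms(2) unfolding chain_subset_def by blast
  ultimately show "p + q \<in> \<Union>C"
    using assms(3) subspace_add unfolding dominated_subspace_def by blast
next
  fix a p assume "p \<in> \<Union>C"
  then show "a *\<^sub>R p \<in> \<Union>C"
    using assms(3) subspace_mul unfolding dominated_subspace_def by blast
next
  fix p assume "p \<in> \<Union>C"
  then show "case p of (x, t) \<Rightarrow> t \<le> B * norm x"
    using assms(3) unfolding dominated_subspace_def by blast
qed

lemma dominated_subspace_scaled_bound:
  assumes G: "subspace G" and c: "\<And>y t. (y, t) \<in> G \<Longrightarrow> c \<le> B * norm (y + x) - t"
    and "0 < k" and yt: "(y, t) \<in> G"
  shows "t + k * c \<le> B * norm (y + k *\<^sub>R x)"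
proof -
  have "(1 / k) *\<^sub>R (y, t) \<in> G" using subspace_mul[OF G yt] .
  then have "c \<le> B * norm ((1 / k) *\<^sub>R y + x) - t / k"
    using c by simp
  then have "k * c \<le> k * (B * norm ((1 / k) *\<^sub>R y + x) - t / k)"
    using \<open>0 < k\<close> by (simp add: mult_left_mono)
  also have "\<dots> = B * (k * norm ((1 / k) *\<^sub>R y + x)) - t"
    using \<open>0 < k\<close> by (simp add: right_diff_distrib)
  also have "k * norm ((1 / k) *\<^sub>R y + x) = norm (y + k *\<^sub>R x)"
  proof -
    have "y + k *\<^sub>R x = k *\<^sub>R ((1 / k) *\<^sub>R y + x)"
      using \<open>0 < k\<close> by (simp add: algebra_simps)
    then show ?thesis using \<open>0 < k\<close> by simp
  qed
  finally show ?thesis by simp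
qed

text \<open>The one-dimensional step: the new value c is squeezed between the lower bounds
  t - B |y - x| and the upper bounds B |y' + x| - t' over the graph; negative multiples of x
  reduce to positive ones by replacing (x, c) with (- x, - c).\<close>
lemma dominated_subspace_one_step:
  assumes G: "dominated_subspace B G" and "0 \<le> B"
  obtains c where "\<And>y t k. (y, t) \<in> G \<Longrightarrow> t + k * c \<le> B * norm (y + k *\<^sub>R x)"
proof -
  have Gsub: "subspace G" and Gdom: "\<And>y t. (y, t) \<in> G \<Longrightarrow> t \<le> B * norm y"
    using G unfolding dominated_subspace_def by auto
  have sandwich: "t - B * norm (y - x) \<le> B * norm (y' + x) - t'"
    if "(y, t) \<in> G" "(y', t') \<in> G" for y t y' t'
  proof -
    have "t + t' \<le> B * norm (y + y')"
      using Gdom subspace_add[OF Gsub that] by simp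
    also have "\<dots> \<le> B * (norm (y - x) + norm (y' + x))"
      using norm_triangle_ineq[of "y - x" "y' + x"] \<open>0 \<le> B\<close> by (simp add: mult_left_mono)
    finally show ?thesis by (simp add: algebra_simps)
  qed
  define D where "D = {t - B * norm (y - x) | y t. (y, t) \<in> G}"
  define c where "c = Sup D"
  have "(0, 0) \<in> G" using subspace_0[OF Gsub] by (simp add: zero_prod_def)
  then have D: "D \<noteq> {}" "bdd_above D"
    unfolding D_def bdd_above_def using sandwich by blast+
  have c_ge: "t - B * norm (y - x) \<le> c" if "(y, t) \<in> G" for y t
    unfolding c_def using that D by (intro cSup_upper) (auto simp: D_def)
  have c_lower: "- c \<le> B * norm (y + - x) - t" if "(y, t) \<in> G" for y t
    using c_ge[OF that] by simp
  have c_upper: "c \<le> B * norm (y + x) - t" if "(y, t) \<in> G" for y t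
    unfolding c_def using that D sandwich by (intro cSup_least) (auto simp: D_def)
  have "t + k * c \<le> B * norm (y + k *\<^sub>R x)" if yt: "(y, t) \<in> G" for y t k
  proof (cases k "0 :: real" rule: linorder_cases)
    case less
    then show ?thesis
      using dominated_subspace_scaled_bound[OF Gsub c_lower, of "- k"] yt by simp
  next
    case equal
    then show ?thesis using Gdom yt by simp
  next
    case greater
    then show ?thesis using dominated_subspace_scaled_bound[OF Gsub c_upper] yt by simp
  qed
  then show ?thesis using that by blast
qed

lemma dominated_subspace_extend:
  assumes G: "dominated_subspace B G" and "0 \<le> B"
  obtains c where "dominated_subspace B (span (insert (x, c) G))"
proof -
  obtain c where c: "\<And>y t k. (y, t) \<in> G \<Longrightarrow> t + k * c \<le> B * norm (y + k *\<^sub>R x)"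
    using dominated_subspace_one_step[OF assms] by blast
  have "span G = G" using G unfolding dominated_subspace_def by simp
  have "t \<le> B * norm y" if yt: "(y, t) \<in> span (insert (x, c) G)" for y t
  proof -
    obtain k where "(y, t) - k *\<^sub>R (x, c) \<in> G"
      using yt span_breakdown_eq[of "(y, t)" "(x, c)" G] \<open>span G = G\<close> by metis
    then have "t - k * c + k * c \<le> B * norm (y - k *\<^sub>R x + k *\<^sub>R x)"
      using c[of "y - k *\<^sub>R x" "t - k * c" k] by simp
    then show ?thesis by simp
  qed
  then have "dominated_subspace B (span (insert (x, c) G))"
    unfolding dominated_subspace_def by auto
  then show ?thesis using that by blast
qed

lemma dominated_subspace_maximal_exists:
  assumes "dominated_subspace B G0"
  obtains M where "G0 \<subseteq> M" "dominated_subspace B M"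
    "\<And>G. dominated_subspace B G \<Longrightarrow> M \<subseteq> G \<Longrightarrow> G = M"
proof -
  define A where "A = {G. dominated_subspace B G \<and> G0 \<subseteq> G}"
  have "G0 \<in> A" using assms unfolding A_def by blast
  have "\<forall>C\<in>chains A. \<exists>U\<in>A. \<forall>G\<in>C. G \<subseteq> U"
  proof
    fix C assume C: "C \<in> chains A"
    show "\<exists>U\<in>A. \<forall>G\<in>C. G \<subseteq> U"
    proof (cases "C = {}")
      case True
      then show ?thesis using \<open>G0 \<in> A\<close> by blast
    next
      case False
      from C have "C \<subseteq> A" "chain\<^sub>\<subseteq> C" unfolding chains_def by auto
      then have "dominated_subspace B (\<Union>C)"
        using False by (intro dominated_subspace_Union_chain) (auto simp: A_def)
      moreover obtain G where "G \<in> C" using False by blast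
      then have "G0 \<subseteq> \<Union>C" using \<open>C \<subseteq> A\<close> unfolding A_def by blast
      ultimately show ?thesis unfolding A_def by blast
    qed
  qed
  from Zorn_Lemma2[OF this] obtain M where "M \<in> A" and M_max: "\<forall>G\<in>A. M \<subseteq> G \<longrightarrow> G = M"
    by blast
  then have "G0 \<subseteq> M" "dominated_subspace B M" unfolding A_def by auto
  moreover have "G = M" if "dominated_subspace B G" "M \<subseteq> G" for G
    using M_max that \<open>G0 \<subseteq> M\<close> unfolding A_def by auto
  ultimately show ?thesis using that by blast
qed

lemma dominated_subspace_maximal_total:
  assumes M: "dominated_subspace B M" and "0 \<le> B"
    and M_max: "\<And>G. dominated_subspace B G \<Longrightarrow> M \<subseteq> G \<Longrightarrow> G = M"
  shows "\<exists>t. (x, t) \<in> M"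
proof -
  obtain c where c: "dominated_subspace B (span (insert (x, c) M))"
    using dominated_subspace_extend[OF M \<open>0 \<le> B\<close>] by blast
  have "M \<subseteq> span (insert (x, c) M)"
    by (meson span_superset subset_insertI subset_trans)
  then have "span (insert (x, c) M) = M"
    using M_max c by blast
  then have "(x, c) \<in> M" using span_base[of "(x, c)" "insert (x, c) M"] by simp
  then show ?thesis ..
qed

lemma dominated_subspace_total_functional:
  assumes M: "dominated_subspace B M" and total: "\<And>x. \<exists>t. (x, t) \<in> M"
  obtains g where "linear g" "\<And>x. (x, g x) \<in> M" "\<And>x. \<bar>g x\<bar> \<le> B * norm x"
proof -
  have M_sub: "subspace M" and M_le: "\<And>x t. (x, t) \<in> M \<Longrightarrow> t \<le> B * norm x"
    using M unfolding dominated_subspace_def by auto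
  have "\<exists>!t. (x, t) \<in> M" for x
    using total dominated_subspace_functional[OF M] by blast
  define g where "g x = (THE t. (x, t) \<in> M)" for x
  have g: "(x, g x) \<in> M" for x
    unfolding g_def using \<open>\<exists>!t. (x, t) \<in> M\<close> by (rule theI')
  have g_eq: "g x = t" if "(x, t) \<in> M" for x t
    using dominated_subspace_functional[OF M g that] .
  have "linear g"
  proof
    fix x y
    show "g (x + y) = g x + g y"
      using subspace_add[OF M_sub g g] by (intro g_eq) simp
  next
    fix a x
    show "g (a *\<^sub>R x) = a *\<^sub>R g x"
      using subspace_mul[OF M_sub g] by (intro g_eq) simp
  qed
  moreover have "\<bar>g x\<bar> \<le> B * norm x" for x
    using M_le[OF g[of x]] M_le[OF g[of "- x"]] linear_neg[OF \<open>linear g\<close>, of x] by simp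
  ultimately show ?thesis using that g by blast
qed

lemma subspace_graph:
  assumes V: "subspace V" and f: "linear_on_set V f"
  shows "subspace ((\<lambda>x. (x, f x)) ` V)"
  unfolding subspace_def
proof (intro conjI ballI allI)
  have "(0, f 0) = 0" using linear_on_set_zero[OF V f] by (simp add: zero_prod_def)
  then show "0 \<in> (\<lambda>x. (x, f x)) ` V"
    by (intro rev_image_eqI[OF subspace_0[OF V]]) simp
next
  fix p q assume "p \<in> (\<lambda>x. (x, f x)) ` V" "q \<in> (\<lambda>x. (x, f x)) ` V"
  then obtain x y where "x \<in> V" "y \<in> V" "p = (x, f x)" "q = (y, f y)" by blast
  then have "p + q = (x + y, f (x + y))" using f unfolding linear_on_set_def by simp
  then show "p + q \<in> (\<lambda>x. (x, f x)) ` V"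
    by (intro rev_image_eqI[OF subspace_add[OF V \<open>x \<in> V\<close> \<open>y \<in> V\<close>]]) simp
next
  fix a p assume "p \<in> (\<lambda>x. (x, f x)) ` V"
  then obtain x where "x \<in> V" "p = (x, f x)" by blast
  then have "a *\<^sub>R p = (\<lambda>x. (x, f x)) (a *\<^sub>R x)"
    using f unfolding linear_on_set_def by simp
  then show "a *\<^sub>R p \<in> (\<lambda>x. (x, f x)) ` V"
    using subspace_mul[OF V \<open>x \<in> V\<close>] by (rule image_eqI)
qed

theorem Hahn_Banach:
  fixes f :: "'a::real_normed_vector \<Rightarrow> real"
  assumes V: "subspace V" and f: "linear_on_set V f"
    and f_le: "\<forall>x\<in>V. f x \<le> B * norm x" and "0 \<le> B"
  shows "\<exists>g. linear g \<and> (\<forall>x\<in>V. g x = f x) \<and> (\<forall>x. \<bar>g x\<bar> \<le> B * norm x)"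
proof -
  have graph: "dominated_subspace B ((\<lambda>x. (x, f x)) ` V)"
    unfolding dominated_subspace_def using subspace_graph[OF V f] f_le by auto
  obtain M where graph_M: "(\<lambda>x. (x, f x)) ` V \<subseteq> M" and M: "dominated_subspace B M"
    and M_max: "\<And>G. dominated_subspace B G \<Longrightarrow> M \<subseteq> G \<Longrightarrow> G = M"
    by (rule dominated_subspace_maximal_exists[OF graph]) (rule that)
  have "\<And>x. \<exists>t. (x, t) \<in> M"
    by (rule dominated_subspace_maximal_total[OF M \<open>0 \<le> B\<close> M_max])
  then obtain g where "linear g" and g: "\<And>x. (x, g x) \<in> M" "\<And>x. \<bar>g x\<bar> \<le> B * norm x"
    by (rule dominated_subspace_total_functional[OF M]) (rule that)
  moreover have "g x = f x" if "x \<in> V" for x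
  proof -
    have "(x, f x) \<in> M" using graph_M that by blast
    then show ?thesis using dominated_subspace_functional[OF M g(1)] by blast
  qed
  ultimately show ?thesis by blast
qed

section \<open>Linear maps on subspaces\<close>

lemma linear_on_set_diff:
  assumes "subspace S" "linear_on_set S f" "x \<in> S" "y \<in> S"
  shows "f (x - y) = f x - f y"
proof -
  have "(-1) *\<^sub>R y \<in> S" using subspace_mul[OF assms(1,4)] .
  then have "f (x + (-1) *\<^sub>R y) = f x + f ((-1) *\<^sub>R y)"
    using assms unfolding linear_on_set_def by blast
  also have "f ((-1) *\<^sub>R y) = (-1) *\<^sub>R f y"
    using assms unfolding linear_on_set_def by blast
  finally show ?thesis by simp
qed

lemma linear_on_set_sum:
  assumes S: "subspace S" and f: "linear_on_set S f" and x: "\<And>i. i \<in> A \<Longrightarrow> x i \<in> S"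
  shows "f (\<Sum>i\<in>A. x i) = (\<Sum>i\<in>A. f (x i))"
  using x
proof (induction A rule: infinite_finite_induct)
  case (insert i A)
  then have "(\<Sum>i\<in>A. x i) \<in> S" using subspace_sum[OF S] by blast
  then show ?case using insert f unfolding linear_on_set_def by simp
qed (use linear_on_set_zero[OF S f] in simp_all)

lemma inj_on_bounded_below:
  assumes "subspace A" "linear_on_set A T" "0 < c" "\<forall>x\<in>A. c * norm x \<le> norm (T x)"
  shows "inj_on T A"
proof (rule inj_onI)
  fix x y assume xy: "x \<in> A" "y \<in> A" "T x = T y"
  then have "c * norm (x - y) \<le> 0"
    using assms(4) subspace_diff[OF assms(1) xy(1,2)] linear_on_set_diff[OF assms(1,2) xy(1,2)]
    by fastforce
  then show "x = y" using \<open>0 < c\<close> by (simp add: mult_le_0_iff)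
qed

lemma linear_on_set_inv_into:
  assumes A: "subspace A" and T: "linear_on_set A T" and "inj_on T A"
  shows "linear_on_set (T ` A) (inv_into A T)"
  unfolding linear_on_set_def
proof (intro conjI ballI allI)
  fix u v assume "u \<in> T ` A" "v \<in> T ` A"
  then obtain x y where "x \<in> A" "y \<in> A" "u = T x" "v = T y" by blast
  moreover have "u + v = T (x + y)"
    using T \<open>x \<in> A\<close> \<open>y \<in> A\<close> \<open>u = T x\<close> \<open>v = T y\<close> unfolding linear_on_set_def by simp
  ultimately show "inv_into A T (u + v) = inv_into A T u + inv_into A T v"
    using subspace_add[OF A] \<open>inj_on T A\<close> by (simp add: inv_into_f_f)
next
  fix a u assume "u \<in> T ` A"
  then obtain x where "x \<in> A" "u = T x" by blast
  moreover have "a *\<^sub>R u = T (a *\<^sub>R x)"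
    using T \<open>x \<in> A\<close> \<open>u = T x\<close> unfolding linear_on_set_def by simp
  ultimately show "inv_into A T (a *\<^sub>R u) = a *\<^sub>R inv_into A T u"
    using subspace_mul[OF A] \<open>inj_on T A\<close> by (simp add: inv_into_f_f)
qed

lemma inv_into_bounded_below:
  assumes A: "subspace A" and T: "linear_on_set A T" and "0 < c"
    and T_ge: "\<forall>x\<in>A. c * norm x \<le> norm (T x)"
  shows "linear_on_set (T ` A) (inv_into A T)"
    and "\<And>x. x \<in> A \<Longrightarrow> inv_into A T (T x) = x"
    and "\<And>y. y \<in> T ` A \<Longrightarrow> norm (inv_into A T y) \<le> norm y / c"
proof -
  have inj: "inj_on T A" using inj_on_bounded_below[OF assms] .
  show "linear_on_set (T ` A) (inv_into A T)" using linear_on_set_inv_into[OF A T inj] .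
  show "inv_into A T (T x) = x" if "x \<in> A" for x using inj that by simp
  show "norm (inv_into A T y) \<le> norm y / c" if "y \<in> T ` A" for y
    using that T_ge \<open>0 < c\<close> by (auto simp: inv_into_f_f[OF inj] pos_le_divide_eq mult.commute)
qed

lemma isomorphic_sub_sym:
  assumes A: "subspace A" and "isomorphic_sub A B"
  shows "isomorphic_sub B A"
proof -
  obtain T c C where T: "linear_on_set A T" "T ` A = B" and "0 < c"
    and T_le: "\<forall>x\<in>A. c * norm x \<le> norm (T x) \<and> norm (T x) \<le> C * norm x"
    using assms(2) unfolding isomorphic_sub_def by blast
  define R where "R = inv_into A T"
  have "\<forall>x\<in>A. c * norm x \<le> norm (T x)" using T_le by blast
  note R = inv_into_bounded_below[OF A T(1) \<open>0 < c\<close> this, folded R_def, unfolded T(2)]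
  have "R ` B = A"
    using R(2) T(2) by (force simp: R_def inv_into_into)
  moreover have "1 / max C c * norm y \<le> norm (R y) \<and> norm (R y) \<le> 1 / c * norm y"
    if "y \<in> B" for y
  proof -
    have "R y \<in> A" "T (R y) = y" using that T(2) by (auto simp: R_def inv_into_into f_inv_into_f)
    then have "norm y \<le> max C c * norm (R y)"
      using T_le by (metis max.cobounded1 mult_right_mono norm_ge_zero order_trans)
    then show ?thesis using R(3)[OF that] \<open>0 < c\<close> by (simp add: field_simps)
  qed
  moreover have "0 < 1 / max C c" using \<open>0 < c\<close> by simp
  ultimately show ?thesis unfolding isomorphic_sub_def using R(1) by blast
qed

section \<open>The sequence spaces l_infty and c0\<close>

lemma apply_Bcontfun_nat:
  fixes g :: "nat \<Rightarrow> real"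
  assumes "\<And>n. \<bar>g n\<bar> \<le> B"
  shows "apply_bcontfun (Bcontfun g) = g"
proof -
  have "g \<in> bcontfun"
    using assms by (intro bcontfun_normI) auto
  then show ?thesis by (simp add: Bcontfun_inverse)
qed

lemma norm_Bcontfun_nat_le:
  fixes g :: "nat \<Rightarrow> real"
  assumes "\<And>n. \<bar>g n\<bar> \<le> B"
  shows "norm (Bcontfun g) \<le> B"
  using assms by (intro norm_bound) (simp add: apply_Bcontfun_nat[OF assms])

lemma abs_apply_le_norm: "\<bar>apply_bcontfun (x :: linf) n\<bar> \<le> norm x"
  using norm_bounded[of x n] by simp

lemma apply_bcontfun_sum:
  "apply_bcontfun (\<Sum>i\<in>A. x i) n = (\<Sum>i\<in>A. apply_bcontfun (x i) n)"
  by (induction A rule: infinite_finite_induct) auto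

lemma abs_apply_diff_le_dist:
  "\<bar>apply_bcontfun x n - apply_bcontfun y n\<bar> \<le> dist x y" for x y :: linf
  using abs_apply_le_norm[of "x - y" n] by (simp add: dist_norm)

lemma Cauchy_linf_apply:
  fixes f :: "nat \<Rightarrow> linf"
  assumes f: "Cauchy f"
  shows "Cauchy (\<lambda>k. apply_bcontfun (f k) n)"
  unfolding Cauchy_def
proof (intro allI impI)
  fix e :: real assume "e > 0"
  then obtain M where "\<forall>i\<ge>M. \<forall>j\<ge>M. dist (f i) (f j) < e"
    using f unfolding Cauchy_def by blast
  then show "\<exists>M. \<forall>i\<ge>M. \<forall>j\<ge>M. dist (apply_bcontfun (f i) n) (apply_bcontfun (f j) n) < e"
    using abs_apply_diff_le_dist unfolding dist_real_def by (blast intro: le_less_trans)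
qed

lemma Cauchy_linf_convergent:
  fixes f :: "nat \<Rightarrow> linf"
  assumes f: "Cauchy f"
  shows "convergent f"
proof -
  have "\<forall>n. \<exists>a. (\<lambda>k. apply_bcontfun (f k) n) \<longlonglongrightarrow> a"
    using Cauchy_linf_apply[OF f] unfolding Cauchy_convergent_iff convergent_def by blast
  then obtain g where g: "\<And>n. (\<lambda>k. apply_bcontfun (f k) n) \<longlonglongrightarrow> g n"
    by metis
  obtain K where K: "\<And>k. norm (f k) \<le> K"
    using Cauchy_Bseq[OF f] unfolding Bseq_def by blast
  have "\<bar>g n\<bar> \<le> K" for n
  proof (rule LIMSEQ_le_const2)
    show "(\<lambda>k. \<bar>apply_bcontfun (f k) n\<bar>) \<longlonglongrightarrow> \<bar>g n\<bar>" using g by (rule tendsto_rabs)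
    show "\<exists>N. \<forall>k\<ge>N. \<bar>apply_bcontfun (f k) n\<bar> \<le> K"
      using abs_apply_le_norm K order_trans by blast
  qed
  then have apply_l: "apply_bcontfun (Bcontfun g) = g" by (rule apply_Bcontfun_nat)
  have "f \<longlonglongrightarrow> Bcontfun g"
  proof (rule metric_LIMSEQ_I)
    fix r :: real assume "r > 0"
    then obtain N where N: "\<And>i j. i \<ge> N \<Longrightarrow> j \<ge> N \<Longrightarrow> dist (f i) (f j) < r / 2"
      using f unfolding Cauchy_def by (meson half_gt_zero)
    have "dist (f k) (Bcontfun g) < r" if "k \<ge> N" for k
    proof -
      have "\<bar>apply_bcontfun (f k) n - g n\<bar> \<le> r / 2" for n
      proof (rule LIMSEQ_le_const2)
        show "(\<lambda>j. \<bar>apply_bcontfun (f k) n - apply_bcontfun (f j) n\<bar>)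
            \<longlonglongrightarrow> \<bar>apply_bcontfun (f k) n - g n\<bar>"
          by (intro tendsto_rabs tendsto_diff tendsto_const g)
        show "\<exists>M. \<forall>j\<ge>M. \<bar>apply_bcontfun (f k) n - apply_bcontfun (f j) n\<bar> \<le> r / 2"
          using N that abs_apply_diff_le_dist by (meson less_imp_le order_trans)
      qed
      then have "norm (f k - Bcontfun g) \<le> r / 2"
        by (intro norm_bound) (simp add: apply_l)
      then show ?thesis using \<open>r > 0\<close> by (simp add: dist_norm)
    qed
    then show "\<exists>N. \<forall>k\<ge>N. dist (f k) (Bcontfun g) < r" by blast
  qed
  then show ?thesis unfolding convergent_def ..
qed

lemma closed_subspace_bounded_below_image:
  assumes \<Phi>: "bounded_linear \<Phi>" and "0 < m" and \<Phi>_ge: "\<forall>y. m * norm y \<le> norm (\<Phi> y)"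
    and Y: "closed_subspace Y"
  shows "closed_subspace (\<Phi> ` Y)"
proof -
  have "subspace Y" "closed Y" using Y unfolding closed_subspace_def by auto
  have "complete (UNIV :: linf set)"
    using Cauchy_linf_convergent unfolding complete_def convergent_def by blast
  have "complete (\<Phi> ` Y)"
  proof (rule complete_isometric_image[OF \<open>0 < m\<close> \<open>subspace Y\<close> \<Phi>])
    show "\<forall>x\<in>Y. m * norm x \<le> norm (\<Phi> x)" using \<Phi>_ge by simp
    show "complete Y"
      using complete_closed_subset[OF \<open>closed Y\<close> subset_UNIV \<open>complete UNIV\<close>] .
  qed
  then have "closed (\<Phi> ` Y)" by (rule complete_imp_closed)
  moreover have "subspace (\<Phi> ` Y)"
    using linear_subspace_image[OF bounded_linear.linear[OF \<Phi>] \<open>subspace Y\<close>] .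
  ultimately show ?thesis unfolding closed_subspace_def by simp
qed

lemma isomorphic_sub_bounded_below_image:
  assumes \<Phi>: "bounded_linear \<Phi>" and "0 < m" and \<Phi>_ge: "\<forall>y. m * norm y \<le> norm (\<Phi> y)"
  shows "isomorphic_sub Y (\<Phi> ` Y)"
proof -
  obtain K where K: "\<And>y. norm (\<Phi> y) \<le> norm y * K"
    using bounded_linear.bounded[OF \<Phi>] by blast
  have "\<forall>y\<in>Y. m * norm y \<le> norm (\<Phi> y) \<and> norm (\<Phi> y) \<le> K * norm y"
    using \<Phi>_ge K by (simp add: mult.commute)
  moreover have "linear_on_set Y \<Phi>"
    unfolding linear_on_set_def
    using linear_add[OF bounded_linear.linear[OF \<Phi>]] linear_scale[OF bounded_linear.linear[OF \<Phi>]]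
    by simp
  ultimately show ?thesis
    unfolding isomorphic_sub_def using \<open>0 < m\<close> by blast
qed

lemma apply_unitvec: "apply_bcontfun (unitvec n) k = (if k = n then 1 else 0)"
  unfolding unitvec_def by (subst apply_Bcontfun_nat[of _ 1]) auto

lemma subspace_c0: "subspace c0"
  unfolding subspace_def c0_def
  by (auto intro: tendsto_add_zero tendsto_mult_right_zero)

lemma unitvec_in_c0: "unitvec n \<in> c0"
proof -
  have "\<forall>\<^sub>F k in sequentially. apply_bcontfun (unitvec n) k = 0"
    by (rule eventually_sequentiallyI[of "Suc n"]) (simp add: apply_unitvec)
  then show ?thesis unfolding c0_def by (simp add: tendsto_eventually)
qed

lemma c0_functional_unitvec_summable:
  assumes f: "linear_on_set c0 f" and f_le: "\<forall>x\<in>c0. \<bar>f x\<bar> \<le> B * norm x" and "0 \<le> B"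
  shows "summable (\<lambda>n. \<bar>f (unitvec n)\<bar>)" and "(\<Sum>n. \<bar>f (unitvec n)\<bar>) \<le> B"
proof -
  have partial: "(\<Sum>n<N. \<bar>f (unitvec n)\<bar>) \<le> B" for N
  proof -
    define v where "v = (\<Sum>n<N. sgn (f (unitvec n)) *\<^sub>R unitvec n)"
    have "v \<in> c0"
      unfolding v_def using subspace_c0 unitvec_in_c0
      by (intro subspace_sum subspace_mul) auto
    have sgn_mult: "sgn t * t = \<bar>t\<bar>" for t :: real by (simp add: sgn_if)
    have "f v = (\<Sum>n<N. \<bar>f (unitvec n)\<bar>)"
      unfolding v_def using subspace_mul[OF subspace_c0 unitvec_in_c0] f
      by (subst linear_on_set_sum[OF subspace_c0 f]) (auto simp: linear_on_set_def unitvec_in_c0 sgn_mult)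
    have "apply_bcontfun v k = (if k < N then sgn (f (unitvec k)) else 0)" for k
      unfolding v_def apply_bcontfun_sum by (simp add: apply_unitvec if_distrib[of "\<lambda>t. _ * t"] cong: if_cong)
    then have "norm v \<le> 1"
      by (intro norm_bound) (auto simp: abs_sgn_eq)
    have "(\<Sum>n<N. \<bar>f (unitvec n)\<bar>) \<le> \<bar>f v\<bar>" using \<open>f v = _\<close> by simp
    also have "\<dots> \<le> B * norm v" using f_le \<open>v \<in> c0\<close> by blast
    also have "\<dots> \<le> B" using \<open>norm v \<le> 1\<close> \<open>0 \<le> B\<close> by (simp add: mult_left_le)
    finally show ?thesis .
  qed
  show "summable (\<lambda>n. \<bar>f (unitvec n)\<bar>)"
    by (rule summableI_nonneg_bounded[OF _ partial]) simp
  then show "(\<Sum>n. \<bar>f (unitvec n)\<bar>) \<le> B"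
    using suminf_le_const partial by blast
qed

definition linf_reindex :: "(nat \<Rightarrow> nat) \<Rightarrow> linf \<Rightarrow> linf" where
  "linf_reindex \<sigma> x = Bcontfun (\<lambda>n. apply_bcontfun x (\<sigma> n))"

lemma apply_linf_reindex [simp]:
  "apply_bcontfun (linf_reindex \<sigma> x) = (\<lambda>n. apply_bcontfun x (\<sigma> n))"
  unfolding linf_reindex_def by (rule apply_Bcontfun_nat[OF abs_apply_le_norm])

lemma norm_linf_reindex_le: "norm (linf_reindex \<sigma> x) \<le> norm x"
  unfolding linf_reindex_def by (rule norm_Bcontfun_nat_le[OF abs_apply_le_norm])

lemma bounded_linear_linf_reindex: "bounded_linear (linf_reindex \<sigma>)"
  by (rule bounded_linear_intro[of _ 1]) (auto intro!: bcontfun_eqI simp: norm_linf_reindex_le)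

lemma linf_reindex_in_c0:
  assumes "filterlim \<sigma> at_top at_top" "x \<in> c0"
  shows "linf_reindex \<sigma> x \<in> c0"
  using filterlim_compose[OF _ assms(1)] assms(2) unfolding c0_def by auto

definition linf_interleave :: "linf \<Rightarrow> linf \<Rightarrow> linf" where
  "linf_interleave u v =
     Bcontfun (\<lambda>n. if even n then apply_bcontfun u (n div 2) else apply_bcontfun v (n div 2))"

lemma abs_interleave_le:
  "\<bar>if even n then apply_bcontfun u (n div 2) else apply_bcontfun v (n div 2)\<bar> \<le> norm u + norm v"
  for u v :: linf
  using abs_apply_le_norm[of u "n div 2"] abs_apply_le_norm[of v "n div 2"] by auto

lemma apply_linf_interleave [simp]:
  "apply_bcontfun (linf_interleave u v) =
     (\<lambda>n. if even n then apply_bcontfun u (n div 2) else apply_bcontfun v (n div 2))"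
  unfolding linf_interleave_def by (rule apply_Bcontfun_nat[OF abs_interleave_le])

lemma norm_linf_interleave_le: "norm (linf_interleave u v) \<le> norm u + norm v"
  unfolding linf_interleave_def by (rule norm_Bcontfun_nat_le[OF abs_interleave_le])

lemma linf_reindex_interleave:
  "linf_reindex (\<lambda>n. 2 * n) (linf_interleave u v) = u"
  "linf_reindex (\<lambda>n. 2 * n + 1) (linf_interleave u v) = v"
  by (auto intro!: bcontfun_eqI)

lemma bounded_linear_linf_interleave:
  assumes f: "bounded_linear f" and g: "bounded_linear g"
  shows "bounded_linear (\<lambda>x. linf_interleave (f x) (g x))"
proof -
  obtain Kf Kg where "\<And>x. norm (f x) \<le> norm x * Kf" "\<And>x. norm (g x) \<le> norm x * Kg"
    using bounded_linear.bounded[OF f] bounded_linear.bounded[OF g] by metis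
  then have "norm (linf_interleave (f x) (g x)) \<le> norm x * (Kf + Kg)" for x
    using norm_linf_interleave_le[of "f x" "g x"] by (simp add: distrib_left) (smt (verit))
  then show ?thesis
    by (intro bounded_linear_intro[of _ "Kf + Kg"])
       (auto intro!: bcontfun_eqI simp: linear_add[OF bounded_linear.linear[OF f]]
          linear_add[OF bounded_linear.linear[OF g]] linear_scale[OF bounded_linear.linear[OF f]]
          linear_scale[OF bounded_linear.linear[OF g]])
qed

lemma linf_operator_extension:
  fixes T :: "'a::real_normed_vector \<Rightarrow> linf"
  assumes V: "subspace V" and T: "linear_on_set V T"
    and T_le: "\<forall>x\<in>V. norm (T x) \<le> B * norm x" and "0 \<le> B"
  shows "\<exists>U. bounded_linear U \<and> (\<forall>x\<in>V. U x = T x) \<and> (\<forall>x. norm (U x) \<le> B * norm x)"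
proof -
  have "\<exists>g. linear g \<and> (\<forall>x\<in>V. g x = apply_bcontfun (T x) n) \<and> (\<forall>x. \<bar>g x\<bar> \<le> B * norm x)"
    for n
  proof (rule Hahn_Banach[OF V _ _ \<open>0 \<le> B\<close>])
    show "linear_on_set V (\<lambda>x. apply_bcontfun (T x) n)"
      using T unfolding linear_on_set_def by simp
    show "\<forall>x\<in>V. apply_bcontfun (T x) n \<le> B * norm x"
      using T_le abs_apply_le_norm[of "T _" n] by (meson abs_le_D1 order_trans)
  qed
  then obtain g where g: "\<And>n. linear (g n)" "\<And>n x. x \<in> V \<Longrightarrow> g n x = apply_bcontfun (T x) n"
    "\<And>n x. \<bar>g n x\<bar> \<le> B * norm x"
    by metis
  define U where "U x = Bcontfun (\<lambda>n. g n x)" for x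
  have apply_U: "apply_bcontfun (U x) = (\<lambda>n. g n x)" for x
    unfolding U_def by (rule apply_Bcontfun_nat[OF g(3)])
  have U_le: "norm (U x) \<le> B * norm x" for x
    unfolding U_def by (rule norm_Bcontfun_nat_le[OF g(3)])
  have "bounded_linear U"
    by (rule bounded_linear_intro[of _ B])
       (auto intro!: bcontfun_eqI simp: apply_U linear_add[OF g(1)] linear_scale[OF g(1)] U_le mult.commute)
  moreover have "\<forall>x\<in>V. U x = T x"
    by (auto intro!: bcontfun_eqI simp: apply_U g(2))
  ultimately show ?thesis using U_le by blast
qed

locale lim_extension =
  fixes L :: "linf \<Rightarrow> real"
  assumes linear: "linear L"
    and extends_lim: "convergent (apply_bcontfun x) \<Longrightarrow> L x = lim (apply_bcontfun x)"
    and abs_le_norm: "\<bar>L x\<bar> \<le> norm x"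

lemma lim_extension_exists: "\<exists>L. lim_extension L"
proof -
  define V where "V = {x :: linf. convergent (apply_bcontfun x)}"
  have "subspace V"
    unfolding subspace_def V_def
    by (auto intro: convergent_add convergent_mult convergent_const)
  moreover have "linear_on_set V (\<lambda>x. lim (apply_bcontfun x))"
    unfolding linear_on_set_def V_def convergent_def
    by (auto intro!: limI tendsto_add tendsto_mult_left simp: limI)
  moreover have "\<forall>x\<in>V. lim (apply_bcontfun x) \<le> 1 * norm x"
  proof
    fix x assume "x \<in> V"
    then have "apply_bcontfun x \<longlonglongrightarrow> lim (apply_bcontfun x)"
      unfolding V_def by (simp add: convergent_LIMSEQ_iff)
    then show "lim (apply_bcontfun x) \<le> 1 * norm x"
      using abs_apply_le_norm[of x] by (auto intro: LIMSEQ_le_const2 abs_le_D1)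
  qed
  ultimately obtain L where "linear L" "\<forall>x\<in>V. L x = lim (apply_bcontfun x)" "\<forall>x. \<bar>L x\<bar> \<le> norm x"
    using Hahn_Banach[of V "\<lambda>x. lim (apply_bcontfun x)" 1] by auto
  then have "lim_extension L"
    unfolding lim_extension_def V_def by auto
  then show ?thesis by blast
qed

definition linf_spread :: "linf \<Rightarrow> linf" where
  "linf_spread = linf_reindex (\<lambda>n. fst (prod_decode n))"

lemma bounded_linear_linf_spread: "bounded_linear linf_spread"
  unfolding linf_spread_def by (rule bounded_linear_linf_reindex)

context lim_extension
begin

text \<open>A sequence x is read as the matrix with entries x (prod_encode (k, j)); the k-th entry of
  row_limits x is the generalized limit of the k-th row. Hence row_limits kills c0 and inverts
  linf_spread, which repeats u k along the whole k-th row.\<close>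
definition row_limits :: "linf \<Rightarrow> linf" where
  "row_limits x = Bcontfun (\<lambda>k. L (linf_reindex (\<lambda>j. prod_encode (k, j)) x))"

lemma abs_L_reindex_le: "\<bar>L (linf_reindex \<sigma> x)\<bar> \<le> norm x"
  using abs_le_norm norm_linf_reindex_le order_trans by blast

lemma apply_row_limits: "apply_bcontfun (row_limits x) k = L (linf_reindex (\<lambda>j. prod_encode (k, j)) x)"
  unfolding row_limits_def by (subst apply_Bcontfun_nat[OF abs_L_reindex_le]) rule

lemma norm_row_limits_le: "norm (row_limits x) \<le> norm x"
  unfolding row_limits_def by (rule norm_Bcontfun_nat_le[OF abs_L_reindex_le])

lemma bounded_linear_row_limits: "bounded_linear row_limits"
proof (rule bounded_linear_intro[of _ 1])
  have reindex: "linear (linf_reindex \<sigma>)" for \<sigma>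
    using bounded_linear.linear[OF bounded_linear_linf_reindex] .
  fix x y r
  show "row_limits (x + y) = row_limits x + row_limits y"
    by (rule bcontfun_eqI) (simp add: apply_row_limits linear_add[OF linear] linear_add[OF reindex])
  show "row_limits (r *\<^sub>R x) = r *\<^sub>R row_limits x"
    by (rule bcontfun_eqI) (simp add: apply_row_limits linear_scale[OF linear] linear_scale[OF reindex])
  show "norm (row_limits x) \<le> norm x * 1"
    using norm_row_limits_le by simp
qed

lemma row_limits_c0: "x \<in> c0 \<Longrightarrow> row_limits x = 0"
proof (rule bcontfun_eqI)
  fix k assume "x \<in> c0"
  have "filterlim (\<lambda>j. prod_encode (k, j)) at_top at_top"
    by (rule filterlim_at_top_mono[OF filterlim_ident]) (simp add: le_prod_encode_2)
  then have "apply_bcontfun (linf_reindex (\<lambda>j. prod_encode (k, j)) x) \<longlonglongrightarrow> 0"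
    using linf_reindex_in_c0 \<open>x \<in> c0\<close> unfolding c0_def by blast
  then show "apply_bcontfun (row_limits x) k = apply_bcontfun 0 k"
    unfolding apply_row_limits by (simp add: extends_lim convergentI limI)
qed

lemma row_limits_spread: "row_limits (linf_spread u) = u"
proof (rule bcontfun_eqI)
  fix k
  have "apply_bcontfun (linf_reindex (\<lambda>j. prod_encode (k, j)) (linf_spread u)) = (\<lambda>j. apply_bcontfun u k)"
    by (simp add: linf_spread_def)
  then show "apply_bcontfun (row_limits (linf_spread u)) k = apply_bcontfun u k"
    unfolding apply_row_limits by (simp add: extends_lim convergent_const)
qed

text \<open>The row limits of twist U E y recover both row_limits (U y) and y - E (U y), which
  makes twist U E bounded below; if U maps w into c0 and E (U w) = w, both vanish at w.\<close>
definition twist :: "(linf \<Rightarrow> linf) \<Rightarrow> (linf \<Rightarrow> linf) \<Rightarrow> linf \<Rightarrow> linf" where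
  "twist U E y = U y - linf_spread (row_limits (U y))
     + linf_spread (linf_interleave (row_limits (U y)) (y - E (U y)))"

lemma bounded_linear_twist:
  assumes U: "bounded_linear U" and E: "bounded_linear E"
  shows "bounded_linear (twist U E)"
  unfolding twist_def[abs_def]
  by (intro bounded_linear_add bounded_linear_sub U bounded_linear_ident bounded_linear_linf_interleave
      bounded_linear_compose[OF bounded_linear_linf_spread] bounded_linear_compose[OF E U]
      bounded_linear_compose[OF bounded_linear_row_limits U])

lemma row_limits_twist:
  "row_limits (twist U E y) = linf_interleave (row_limits (U y)) (y - E (U y))"
proof -
  interpret row_limits: bounded_linear row_limits by (rule bounded_linear_row_limits)
  show ?thesis
    unfolding twist_def by (simp add: row_limits.add row_limits.diff row_limits_spread)
qed

lemma norm_le_twist: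
  assumes E_le: "\<And>x. norm (E x) \<le> norm x * K" and "0 \<le> K"
  shows "norm y \<le> (1 + 3 * K) * norm (twist U E y)"
proof -
  have norm_spread: "norm (linf_spread v) \<le> norm v" for v
    unfolding linf_spread_def by (rule norm_linf_reindex_le)
  define p where "p = twist U E y"
  define b where "b = row_limits p"
  have b: "b = linf_interleave (row_limits (U y)) (y - E (U y))"
    unfolding b_def p_def by (rule row_limits_twist)
  have "norm b \<le> norm p"
    unfolding b_def by (rule norm_row_limits_le)
  moreover have "norm (row_limits (U y)) \<le> norm b"
    using norm_linf_reindex_le[of "\<lambda>n. 2 * n" b] unfolding b linf_reindex_interleave .
  moreover have "norm (y - E (U y)) \<le> norm b"
    using norm_linf_reindex_le[of "\<lambda>n. 2 * n + 1" b] unfolding b linf_reindex_interleave .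
  moreover have "U y = (p + linf_spread (row_limits (U y))) - linf_spread b"
    by (simp add: p_def b twist_def)
  then have "norm (U y) \<le> norm p + norm (linf_spread (row_limits (U y))) + norm (linf_spread b)"
    using norm_triangle_ineq4[of "p + linf_spread (row_limits (U y))" "linf_spread b"]
      norm_triangle_ineq[of p "linf_spread (row_limits (U y))"] by simp
  ultimately have U_le: "norm (U y) \<le> 3 * norm p" and r_le: "norm (y - E (U y)) \<le> norm p"
    using norm_spread[of b] norm_spread[of "row_limits (U y)"] by linarith+
  have "norm (E (U y)) \<le> 3 * norm p * K"
    using E_le[of "U y"] mult_right_mono[OF U_le \<open>0 \<le> K\<close>] by linarith
  moreover have "norm y \<le> norm (y - E (U y)) + norm (E (U y))"
    using norm_triangle_ineq[of "y - E (U y)" "E (U y)"] by simp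
  ultimately show ?thesis
    using r_le unfolding p_def by (simp add: algebra_simps)
qed

lemma twist_bounded_below:
  assumes "bounded_linear E"
  shows "\<exists>m>0. \<forall>y. m * norm y \<le> norm (twist U E y)"
proof -
  obtain K where "K > 0" and E_le: "\<And>x. norm (E x) \<le> norm x * K"
    using bounded_linear.pos_bounded[OF assms] by blast
  show ?thesis
  proof (intro exI[of _ "1 / (1 + 3 * K)"] conjI allI)
    show "0 < 1 / (1 + 3 * K)" using \<open>K > 0\<close> by simp
    fix y
    show "1 / (1 + 3 * K) * norm y \<le> norm (twist U E y)"
      using norm_le_twist[OF E_le, of y U] \<open>K > 0\<close> by (simp add: field_simps)
  qed
qed

lemma twist_eq:
  assumes "U w \<in> c0" "E (U w) = w"
  shows "twist U E w = U w"
proof -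
  have "linf_interleave 0 0 = 0" by (rule bcontfun_eqI) simp
  moreover have "linf_spread 0 = 0" using linear_0[OF bounded_linear.linear[OF bounded_linear_linf_spread]] .
  ultimately show ?thesis
    unfolding twist_def using assms by (simp add: row_limits_c0)
qed

end

lemma linf_embedding_onto_c0:
  assumes W: "subspace W" and "isomorphic_sub W c0"
  shows "\<exists>\<Phi>. bounded_linear \<Phi> \<and> (\<exists>m>0. \<forall>y. m * norm y \<le> norm (\<Phi> y)) \<and> \<Phi> ` W = c0"
proof -
  obtain T c C where T: "linear_on_set W T" "T ` W = c0" and "0 < c"
    and T_le: "\<forall>x\<in>W. c * norm x \<le> norm (T x) \<and> norm (T x) \<le> C * norm x"
    using assms(2) unfolding isomorphic_sub_def by blast
  define R where "R = inv_into W T"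
  have "\<forall>x\<in>W. c * norm x \<le> norm (T x)" using T_le by blast
  note R = inv_into_bounded_below[OF W T(1) \<open>0 < c\<close> this, folded R_def, unfolded T(2)]
  have R_le: "\<forall>a\<in>c0. norm (R a) \<le> 1 / c * norm a"
    using R(3) by simp
  obtain E where E: "bounded_linear E" "\<forall>a\<in>c0. E a = R a"
    using linf_operator_extension[OF subspace_c0 R(1) R_le] \<open>0 < c\<close> by auto
  have "\<forall>x\<in>W. norm (T x) \<le> max C 0 * norm x"
    using T_le by (meson max.cobounded1 mult_right_mono norm_ge_zero order_trans)
  then obtain U where U: "bounded_linear U" "\<forall>w\<in>W. U w = T w"
    using linf_operator_extension[OF W T(1) _ max.cobounded2] by blast
  obtain L where "lim_extension L" using lim_extension_exists by blast
  interpret lim_extension L by fact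
  have "twist U E w = T w" if "w \<in> W" for w
  proof -
    have "T w \<in> c0" using that T(2) by blast
    then show ?thesis using that U(2) E(2) R(2) twist_eq[of U w E] by simp
  qed
  then have "twist U E ` W = c0"
    using T(2) by auto
  then show ?thesis
    using bounded_linear_twist[OF U(1) E(1)] twist_bounded_below[OF E(1)] by blast
qed

section \<open>Duals, biduals and the Grothendieck property\<close>

lemma dual_sp_bound:
  assumes "h \<in> dual_sp S"
  obtains K where "0 \<le> K" "\<forall>x\<in>S. \<bar>h x\<bar> \<le> K * norm x"
proof -
  obtain K where K: "\<forall>x\<in>S. \<bar>h x\<bar> \<le> K * norm x" using assms unfolding dual_sp_def by blast
  then have "\<forall>x\<in>S. \<bar>h x\<bar> \<le> max K 0 * norm x"
    by (meson max.cobounded1 mult_right_mono norm_ge_zero order_trans)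
  then show ?thesis using that[of "max K 0"] by simp
qed

lemma dual_sp_scale:
  assumes "f \<in> dual_sp S"
  shows "(\<lambda>x. a * f x) \<in> dual_sp S"
proof -
  obtain K where "\<forall>x\<in>S. \<bar>f x\<bar> \<le> K * norm x" using assms unfolding dual_sp_def by blast
  then have "\<forall>x\<in>S. \<bar>a * f x\<bar> \<le> (\<bar>a\<bar> * K) * norm x"
    by (simp add: abs_mult mult.assoc mult_left_mono)
  moreover have "linear_on_set S (\<lambda>x. a * f x)"
    using assms unfolding dual_sp_def linear_on_set_def by (simp add: algebra_simps)
  ultimately show ?thesis unfolding dual_sp_def by blast
qed

lemma dual_sp_compose:
  assumes T: "linear_on_set A T" and TA: "T ` A \<subseteq> B"
    and T_le: "\<forall>a\<in>A. norm (T a) \<le> K * norm a" and h: "h \<in> dual_sp B"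
  shows "(\<lambda>a. h (T a)) \<in> dual_sp A"
proof -
  obtain Kh where "0 \<le> Kh" and h_le: "\<forall>x\<in>B. \<bar>h x\<bar> \<le> Kh * norm x"
    using dual_sp_bound[OF h] by blast
  have "linear_on_set A (\<lambda>a. h (T a))"
    using T TA h unfolding dual_sp_def linear_on_set_def by (simp add: image_subset_iff)
  moreover have "\<bar>h (T a)\<bar> \<le> (Kh * K) * norm a" if "a \<in> A" for a
  proof -
    have "\<bar>h (T a)\<bar> \<le> Kh * norm (T a)" using h_le TA that by blast
    also have "\<dots> \<le> Kh * (K * norm a)" using T_le that \<open>0 \<le> Kh\<close> by (simp add: mult_left_mono)
    finally show ?thesis by simp
  qed
  ultimately show ?thesis unfolding dual_sp_def by blast
qed

lemma null_functional_in_dual_ball: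
  assumes "subspace S" "\<forall>x\<in>S. d x = 0"
  shows "d \<in> dual_ball S"
proof -
  have "linear_on_set S d"
    using assms subspace_add[OF assms(1)] subspace_mul[OF assms(1)] unfolding linear_on_set_def by simp
  moreover have "\<forall>x\<in>S. \<bar>d x\<bar> \<le> 0 * norm x" using assms(2) by simp
  ultimately show ?thesis
    using assms(2) unfolding dual_ball_def dual_sp_def by (auto intro!: exI[of _ 0])
qed

lemma bidual_sp_null:
  assumes S: "subspace S" and F: "F \<in> bidual_sp S" and d: "\<forall>x\<in>S. d x = 0"
  shows "F d = 0"
proof (rule ccontr)
  assume "F d \<noteq> 0"
  obtain C where C: "\<forall>h\<in>dual_ball S. \<bar>F h\<bar> \<le> C"
    using F unfolding bidual_sp_def by blast
  define t where "t = (\<bar>C\<bar> + 1) / F d"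
  have "d \<in> dual_sp S" "(\<lambda>x. t * d x) \<in> dual_ball S"
    using null_functional_in_dual_ball[OF S] d unfolding dual_ball_def by auto
  then have "\<bar>t * F d\<bar> \<le> C"
    using C F unfolding bidual_sp_def by auto
  then show False using \<open>F d \<noteq> 0\<close> by (simp add: t_def)
qed

lemma bidual_sp_cong:
  assumes S: "subspace S" and F: "F \<in> bidual_sp S"
    and "f \<in> dual_sp S" "g \<in> dual_sp S" "\<forall>x\<in>S. f x = g x"
  shows "F f = F g"
proof -
  define d where "d x = f x - g x" for x
  have "\<forall>x\<in>S. d x = 0" using assms(5) by (simp add: d_def)
  then have "d \<in> dual_sp S" "F d = 0"
    using null_functional_in_dual_ball[OF S] bidual_sp_null[OF S F] unfolding dual_ball_def by auto
  moreover have "f = (\<lambda>x. g x + d x)" by (simp add: d_def)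
  ultimately show ?thesis
    using F \<open>g \<in> dual_sp S\<close> unfolding bidual_sp_def by simp
qed

lemma bidual_sp_bounded:
  assumes F: "F \<in> bidual_sp S"
  obtains C where
    "\<And>f K. f \<in> dual_sp S \<Longrightarrow> 0 < K \<Longrightarrow>
      \<forall>x\<in>S. \<bar>f x\<bar> \<le> K * norm x \<Longrightarrow> \<bar>F f\<bar> \<le> K * C"
proof -
  obtain C where C: "\<forall>f\<in>dual_ball S. \<bar>F f\<bar> \<le> C"
    using F unfolding bidual_sp_def by blast
  have F_scale: "\<And>a f. f \<in> dual_sp S \<Longrightarrow> F (\<lambda>x. a * f x) = a * F f"
    using F unfolding bidual_sp_def by blast
  have "\<bar>F f\<bar> \<le> K * C"
    if f: "f \<in> dual_sp S" and "0 < K" and f_le: "\<forall>x\<in>S. \<bar>f x\<bar> \<le> K * norm x" for f K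
  proof -
    have "\<bar>1 / K * f x\<bar> \<le> norm x" if "x \<in> S" for x
      using f_le that \<open>0 < K\<close> by (simp add: field_simps abs_mult)
    then have "(\<lambda>x. 1 / K * f x) \<in> dual_ball S"
      using dual_sp_scale[OF f] unfolding dual_ball_def by blast
    then have "\<bar>F (\<lambda>x. 1 / K * f x)\<bar> \<le> C" using C by blast
    moreover have "F (\<lambda>x. K * (1 / K * f x)) = K * F (\<lambda>x. 1 / K * f x)"
      using F_scale[OF dual_sp_scale[OF f]] .
    moreover have "(\<lambda>x. K * (1 / K * f x)) = f" using \<open>0 < K\<close> by simp
    ultimately show ?thesis using \<open>0 < K\<close> by (simp add: abs_mult)
  qed
  then show ?thesis using that by blast
qed

lemma bidual_sp_precompose:
  assumes F: "F \<in> bidual_sp S" and R: "linear_on_set S R" "R ` S \<subseteq> Y"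
    and R_le: "\<forall>s\<in>S. norm (R s) \<le> K * norm s"
  shows "(\<lambda>h. F (\<lambda>s. h (R s))) \<in> bidual_sp Y"
proof -
  have comp: "(\<lambda>s. h (R s)) \<in> dual_sp S" if "h \<in> dual_sp Y" for h
    using dual_sp_compose[OF R R_le that] .
  obtain C where C: "\<And>f K. f \<in> dual_sp S \<Longrightarrow> 0 < K \<Longrightarrow>
      \<forall>x\<in>S. \<bar>f x\<bar> \<le> K * norm x \<Longrightarrow> \<bar>F f\<bar> \<le> K * C"
    using bidual_sp_bounded[OF F] by blast
  have F_add: "\<And>f g. f \<in> dual_sp S \<Longrightarrow> g \<in> dual_sp S \<Longrightarrow> F (\<lambda>x. f x + g x) = F f + F g"
    and F_scale: "\<And>a f. f \<in> dual_sp S \<Longrightarrow> F (\<lambda>x. a * f x) = a * F f"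
    using F unfolding bidual_sp_def by blast+
  have "\<bar>F (\<lambda>s. h (R s))\<bar> \<le> max K 1 * C" if h: "h \<in> dual_ball Y" for h
  proof (rule C)
    show "(\<lambda>s. h (R s)) \<in> dual_sp S" using comp h unfolding dual_ball_def by blast
    show "\<forall>s\<in>S. \<bar>h (R s)\<bar> \<le> max K 1 * norm s"
    proof
      fix s assume "s \<in> S"
      have "\<bar>h (R s)\<bar> \<le> norm (R s)" using h R(2) \<open>s \<in> S\<close> unfolding dual_ball_def by blast
      also have "\<dots> \<le> max K 1 * norm s"
        using R_le \<open>s \<in> S\<close> by (meson max.cobounded1 mult_right_mono norm_ge_zero order_trans)
      finally show "\<bar>h (R s)\<bar> \<le> max K 1 * norm s" .
    qed
  qed simp
  moreover have "F (\<lambda>s. f (R s) + g (R s)) = F (\<lambda>s. f (R s)) + F (\<lambda>s. g (R s))"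
    if "f \<in> dual_sp Y" "g \<in> dual_sp Y" for f g
    using F_add[OF comp[OF that(1)] comp[OF that(2)]] .
  moreover have "F (\<lambda>s. a * f (R s)) = a * F (\<lambda>s. f (R s))" if "f \<in> dual_sp Y" for a f
    using F_scale[OF comp[OF that]] .
  ultimately show ?thesis
    unfolding bidual_sp_def by blast
qed

lemma weak_conv_precompose:
  assumes S: "subspace S" and R: "linear_on_set S R" "R ` S \<subseteq> Y" "\<forall>s\<in>S. norm (R s) \<le> K * norm s"
    and ys: "weak_conv Y ys g" "\<And>n. ys n \<in> dual_sp Y" and xs: "\<And>n. xs n \<in> dual_sp S"
    and ys_xs: "\<And>n s. s \<in> S \<Longrightarrow> ys n (R s) = xs n s"
  shows "weak_conv S xs (\<lambda>s. g (R s))"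
  unfolding weak_conv_def
proof
  fix F assume F: "F \<in> bidual_sp S"
  have "(\<lambda>n. F (\<lambda>s. ys n (R s))) \<longlonglongrightarrow> F (\<lambda>s. g (R s))"
    using bspec[OF ys(1)[unfolded weak_conv_def] bidual_sp_precompose[OF F R]] by simp
  moreover have "F (\<lambda>s. ys n (R s)) = F (xs n)" for n
    by (rule bidual_sp_cong[OF S F dual_sp_compose[OF R ys(2)] xs]) (simp add: ys_xs)
  ultimately show "(\<lambda>n. F (xs n)) \<longlonglongrightarrow> F (\<lambda>s. g (R s))" by simp
qed

lemma grothendieck_isomorphic:
  assumes Y: "subspace Y" "grothendieck Y" and S: "subspace S" and "isomorphic_sub Y S"
  shows "grothendieck S"
  unfolding grothendieck_def
proof (intro allI impI)
  obtain T c C where T: "linear_on_set Y T" "T ` Y = S" and "0 < c"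
    and T_le: "\<forall>y\<in>Y. c * norm y \<le> norm (T y) \<and> norm (T y) \<le> C * norm y"
    using assms(4) unfolding isomorphic_sub_def by blast
  define R where "R = inv_into Y T"
  have R: "linear_on_set S R" "R ` S \<subseteq> Y" "\<forall>s\<in>S. norm (R s) \<le> 1 / c * norm s"
    "\<And>s. s \<in> S \<Longrightarrow> T (R s) = s"
    using inv_into_bounded_below[OF Y(1) T(1) \<open>0 < c\<close>] T_le T(2)
    by (auto simp: R_def inv_into_into f_inv_into_f)
  have T_le': "\<forall>y\<in>Y. norm (T y) \<le> C * norm y" using T_le by blast
  fix xs x
  assume "(\<forall>n. xs n \<in> dual_sp S) \<and> x \<in> dual_sp S \<and> weakstar_conv S xs x"
  then have xs: "\<And>n. xs n \<in> dual_sp S" and x: "x \<in> dual_sp S" and conv: "weakstar_conv S xs x"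
    by auto
  define ys where "ys n = (\<lambda>y. xs n (T y))" for n
  have ys: "ys n \<in> dual_sp Y" for n
    unfolding ys_def using dual_sp_compose[OF T(1) _ T_le' xs] T(2) by blast
  moreover have "weakstar_conv Y ys (\<lambda>y. x (T y))"
    using conv T(2) unfolding weakstar_conv_def ys_def by blast
  moreover have "(\<lambda>y. x (T y)) \<in> dual_sp Y"
    using dual_sp_compose[OF T(1) _ T_le' x] T(2) by blast
  ultimately obtain g where g: "g \<in> dual_sp Y" "weak_conv Y ys g"
    using Y(2) unfolding grothendieck_def by blast
  have "weak_conv S xs (\<lambda>s. g (R s))"
    by (rule weak_conv_precompose[OF S R(1,2,3) g(2) ys xs]) (simp add: ys_def R(4))
  then show "\<exists>y\<in>dual_sp S. weak_conv S xs y"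
    using dual_sp_compose[OF R(1,2,3) g(1)] by blast
qed

lemma evaluation_in_bidual_sp:
  assumes "v \<in> S" shows "(\<lambda>f. f v) \<in> bidual_sp S"
  unfolding bidual_sp_def dual_ball_def using assms by (auto intro!: exI[of _ "norm v"])

lemma weak_limit_eq_weakstar_limit:
  assumes "weak_conv S xs y" "weakstar_conv S xs x" "v \<in> S"
  shows "y v = x v"
proof -
  have "(\<lambda>n. xs n v) \<longlonglongrightarrow> y v"
    using bspec[OF assms(1)[unfolded weak_conv_def] evaluation_in_bidual_sp[OF assms(3)]] by simp
  moreover have "(\<lambda>n. xs n v) \<longlonglongrightarrow> x v"
    using assms(2,3) unfolding weakstar_conv_def by blast
  ultimately show ?thesis by (rule LIMSEQ_unique)
qed

lemma dual_sp_unitvec_summable: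
  assumes "c0 \<subseteq> S" "f \<in> dual_sp S" "\<forall>x\<in>S. \<bar>f x\<bar> \<le> B * norm x" "0 \<le> B"
  shows "summable (\<lambda>n. \<bar>f (unitvec n)\<bar>)" and "(\<Sum>n. \<bar>f (unitvec n)\<bar>) \<le> B"
proof -
  have "linear_on_set c0 f"
    using assms(1,2) unfolding dual_sp_def linear_on_set_def by blast
  moreover have "\<forall>x\<in>c0. \<bar>f x\<bar> \<le> B * norm x" using assms(1,3) by blast
  ultimately show "summable (\<lambda>n. \<bar>f (unitvec n)\<bar>)" "(\<Sum>n. \<bar>f (unitvec n)\<bar>) \<le> B"
    using c0_functional_unitvec_summable assms(4) by blast+
qed

lemma summable_linf_weighted:
  assumes "summable (\<lambda>n. \<bar>a n\<bar>)"
  shows "summable (\<lambda>n. apply_bcontfun z n * a n)"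
    and "\<bar>\<Sum>n. apply_bcontfun z n * a n\<bar> \<le> norm z * (\<Sum>n. \<bar>a n\<bar>)"
proof -
  have le: "norm (apply_bcontfun z n * a n) \<le> norm z * \<bar>a n\<bar>" for n
    using abs_apply_le_norm[of z n] by (simp add: abs_mult mult_right_mono)
  have sum_le: "summable (\<lambda>n. norm z * \<bar>a n\<bar>)" using assms by (rule summable_mult)
  have sum_abs: "summable (\<lambda>n. \<bar>apply_bcontfun z n * a n\<bar>)"
    by (rule summable_comparison_test[OF _ sum_le]) (use le in auto)
  then show "summable (\<lambda>n. apply_bcontfun z n * a n)" by (rule summable_rabs_cancel)
  have "\<bar>\<Sum>n. apply_bcontfun z n * a n\<bar> \<le> (\<Sum>n. \<bar>apply_bcontfun z n * a n\<bar>)"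
    using sum_abs by (rule summable_rabs)
  also have "\<dots> \<le> (\<Sum>n. norm z * \<bar>a n\<bar>)"
    using le sum_abs sum_le by (intro suminf_le) simp_all
  also have "\<dots> = norm z * (\<Sum>n. \<bar>a n\<bar>)" using suminf_mult[OF assms] by simp
  finally show "\<bar>\<Sum>n. apply_bcontfun z n * a n\<bar> \<le> norm z * (\<Sum>n. \<bar>a n\<bar>)" .
qed

lemma j_bistar_linf_to_c0bidual:
  "j_bistar (linf_to_c0bidual z) f = (\<Sum>n. apply_bcontfun z n * f (unitvec n))"
  by (simp add: j_bistar_def linf_to_c0bidual_def j_star_def unitvec_in_c0)

lemma j_bistar_linf_in_bidual_sp:
  assumes "c0 \<subseteq> S"
  shows "j_bistar (linf_to_c0bidual z) \<in> bidual_sp S"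
proof -
  have summable: "summable (\<lambda>n. \<bar>f (unitvec n)\<bar>)" if f: "f \<in> dual_sp S" for f
  proof -
    obtain K where "0 \<le> K" "\<forall>x\<in>S. \<bar>f x\<bar> \<le> K * norm x" using dual_sp_bound[OF f] by blast
    then show ?thesis using dual_sp_unitvec_summable(1)[OF assms f] by blast
  qed
  have "\<bar>j_bistar (linf_to_c0bidual z) f\<bar> \<le> norm z" if "f \<in> dual_ball S" for f
  proof -
    have "f \<in> dual_sp S" "\<forall>x\<in>S. \<bar>f x\<bar> \<le> 1 * norm x" using that unfolding dual_ball_def by auto
    then have "(\<Sum>n. \<bar>f (unitvec n)\<bar>) \<le> 1" using dual_sp_unitvec_summable(2)[OF assms] by simp
    have "\<bar>\<Sum>n. apply_bcontfun z n * f (unitvec n)\<bar> \<le> norm z * (\<Sum>n. \<bar>f (unitvec n)\<bar>)"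
      using summable_linf_weighted(2)[OF summable[OF \<open>f \<in> dual_sp S\<close>]] .
    also have "\<dots> \<le> norm z * 1"
      using \<open>(\<Sum>n. \<bar>f (unitvec n)\<bar>) \<le> 1\<close> by (rule mult_left_mono) simp
    finally show ?thesis
      unfolding j_bistar_linf_to_c0bidual by simp
  qed
  moreover have "j_bistar (linf_to_c0bidual z) (\<lambda>x. f x + g x)
      = j_bistar (linf_to_c0bidual z) f + j_bistar (linf_to_c0bidual z) g"
    if "f \<in> dual_sp S" "g \<in> dual_sp S" for f g
    unfolding j_bistar_linf_to_c0bidual
    using suminf_add[OF summable_linf_weighted(1)[OF summable[OF that(1)]]
        summable_linf_weighted(1)[OF summable[OF that(2)]]]
    by (simp add: distrib_left)
  moreover have "j_bistar (linf_to_c0bidual z) (\<lambda>x. a * f x) = a * j_bistar (linf_to_c0bidual z) f"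
    if "f \<in> dual_sp S" for a f
    unfolding j_bistar_linf_to_c0bidual
    using suminf_mult[OF summable_linf_weighted(1)[OF summable[OF that]], of a]
    by (simp add: algebra_simps)
  ultimately show ?thesis
    unfolding bidual_sp_def by blast
qed

lemma grothendieck_imp_linf_grothendieck_subspace:
  assumes S: "closed_subspace S" and "c0 \<subseteq> S" and "grothendieck S"
  shows "linf_grothendieck_subspace S"
proof -
  have "linf_conv xs x"
    if xs: "\<forall>n. xs n \<in> dual_sp S" and x: "x \<in> dual_sp S" and conv: "weakstar_conv S xs x" for xs x
    unfolding linf_conv_def
  proof
    fix z
    let ?F = "j_bistar (linf_to_c0bidual z)"
    obtain y where y: "y \<in> dual_sp S" "weak_conv S xs y"
      using \<open>grothendieck S\<close> xs x conv unfolding grothendieck_def by blast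
    have F: "?F \<in> bidual_sp S" using j_bistar_linf_in_bidual_sp[OF \<open>c0 \<subseteq> S\<close>] .
    have "subspace S" using S unfolding closed_subspace_def by blast
    then have "?F y = ?F x"
      using bidual_sp_cong[OF _ F y(1) x] weak_limit_eq_weakstar_limit[OF y(2) conv] by blast
    then show "(\<lambda>n. ?F (xs n)) \<longlonglongrightarrow> ?F x"
      using bspec[OF y(2)[unfolded weak_conv_def] F] by simp
  qed
  then show ?thesis
    unfolding linf_grothendieck_subspace_def using S \<open>c0 \<subseteq> S\<close> by blast
qed

theorem proposition3p4:
  fixes Y :: "linf set"
  assumes "closed_subspace Y"
    and "grothendieck Y"
    and "\<exists>W. W \<subseteq> Y \<and> closed_subspace W \<and> isomorphic_sub W c0"
  shows "\<exists>S. linf_grothendieck_subspace S \<and> isomorphic_sub S Y"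
proof -
  obtain W where "W \<subseteq> Y" "closed_subspace W" "isomorphic_sub W c0"
    using assms(3) by blast
  then obtain \<Phi> m where \<Phi>: "bounded_linear \<Phi>" and "0 < m"
    and \<Phi>_ge: "\<forall>y. m * norm y \<le> norm (\<Phi> y)" and "\<Phi> ` W = c0"
    using linf_embedding_onto_c0 unfolding closed_subspace_def by metis
  have Y: "subspace Y" using assms(1) unfolding closed_subspace_def by blast
  have S: "closed_subspace (\<Phi> ` Y)"
    using closed_subspace_bounded_below_image[OF \<Phi> \<open>0 < m\<close> \<Phi>_ge assms(1)] .
  then have "subspace (\<Phi> ` Y)" unfolding closed_subspace_def by blast
  have iso: "isomorphic_sub Y (\<Phi> ` Y)"
    using isomorphic_sub_bounded_below_image[OF \<Phi> \<open>0 < m\<close> \<Phi>_ge] .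
  have "c0 \<subseteq> \<Phi> ` Y"
    using \<open>W \<subseteq> Y\<close> \<open>\<Phi> ` W = c0\<close> by blast
  then have "linf_grothendieck_subspace (\<Phi> ` Y)"
    using grothendieck_imp_linf_grothendieck_subspace[OF S]
      grothendieck_isomorphic[OF Y assms(2) \<open>subspace (\<Phi> ` Y)\<close> iso] by blast
  moreover have "isomorphic_sub (\<Phi> ` Y) Y" using isomorphic_sub_sym[OF Y iso] .
  ultimately show ?thesis by blast
qed

end
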